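(* For monomials $m,m'$ of $\mathcal{A}$ with coefficient $1$, we have $m\le m'$ if and only if $\mathbf{w}(m)\le\mathbf{w}(m')$. Furthermore, the poset $(\mathbf{Z}_{\ge0}^r)^\star$ is noetherian: for any sequence $x_1,x_2,\dots$ of its elements there exist $i<j$ with $x_i\le x_j$.
   Context: Let $\mathbf{k}$ be a commutative noetherian ring, $r$ a positive integer, $x_1,\dots,x_r$ the standard basis of $\mathbf{k}^r$ (so $\mathrm{Sym}^d\mathbf{k}^r$ is the space of degree-$d$ polynomials in $x_1,\dots,x_r$). Let $\mathcal{A}=\bigoplus_{n,d\ge0}\mathcal{A}_{d,n}$ with $\mathcal{A}_{d,n}=(\mathrm{Sym}^d\mathbf{k}^r)^{\otimes n}$ (tensor over $\mathbf{k}$). A split $\sigma$ of $[n+m]$ is a pair of a subset $\{i_1<\cdots<i_n\}$ of $[n+m]=\{1,\dots,n+m\}$ and its complement $\{j_1<\cdots<j_m\}$; it defines the shuffle product $\cdot_\sigma:\mathcal{A}_{d,n}\otimes\mathcal{A}_{d,m}\to\mathcal{A}_{d,n+m}$, $(u_1\otimes\cdots\otimes u_n)\cdot_\sigma(v_1\otimes\cdots\otimes v_m)=w_1\otimes\cdots\otimes w_{n+m}$ with $w_{i_k}=u_k$, $w_{j_k}=v_k$ (and $f\cdot_\sigma g=0$ if bidegrees do not match $\sigma$). The product $*:\mathcal{A}_{d,n}\otimes\mathcal{A}_{e,n}\to\mathcal{A}_{d+e,n}$ multiplies factorwise, $(u_1\otimes\cdots\otimes u_n)*(v_1\otimes\cdots\otimes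 v_n)=u_1v_1\otimes\cdots\otimes u_nv_n$, and all other products are $0$. An ideal of $\mathcal{A}$ is a bihomogeneous subspace $I$ with $g*f\in I$ and $g\cdot_\sigma f\in I$ for all $f\in I$, $g\in\mathcal{A}$ and splits $\sigma$. A monomial is an element $w_1\otimes\cdots\otimes w_n$ with each $w_i$ a scalar multiple of a monomial $x_{j_1}\cdots x_{j_d}$. For monomials $m,m'$ with coefficient $1$, $m\le m'$ means $m'$ lies in the ideal generated by $m$. Order $\mathbf{Z}_{\ge0}^r$ pointwise. $(\mathbf{Z}_{\ge0}^r)^\star$ is the set of finite words with letters in $\mathbf{Z}^r_{\ge0}$, with $(w_1,\dots,w_n)\le(w'_1,\dots,w'_{m})$ iff there exist $1\le i_1<\cdots<i_n\le m$ with $w_j\le w'_{i_j}$ for all $j$. For a monomial $m=w_1\otimes\cdots\otimes w_n$, $\mathbf{w}(m)$ is the word of exponent vectors of $w_1,\dots,w_n$. *)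

theory Defs
  imports Main
begin

definition ring_ideal :: "'k::comm_ring_1 set \<Rightarrow> bool" where
  "ring_ideal I \<longleftrightarrow> 0 \<in> I \<and> (\<forall>a\<in>I. \<forall>b\<in>I. a + b \<in> I) \<and> (\<forall>a\<in>I. \<forall>c. c * a \<in> I)"

definition noetherian_ring :: "'k::comm_ring_1 itself \<Rightarrow> bool" where
  "noetherian_ring _ \<longleftrightarrow>
     (\<forall>F :: nat \<Rightarrow> 'k set. (\<forall>n. ring_ideal (F n)) \<longrightarrow> (\<forall>n. F n \<subseteq> F (Suc n))
        \<longrightarrow> (\<exists>N. \<forall>n\<ge>N. F n = F N))"

text \<open>Exponent vectors in Z_{>=0}^r are lists of naturals of length r.
  A basis index of A is a pair (d, w): w is a word (list) of exponent vectors,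
  each of total degree d; it indexes the monomial w_1 (x) ... (x) w_n in A_{d,n},
  n = length w.  (For n = 0 the index (d, []) is the unit 1 of A_{d,0} = k.)
  Elements of A are finitely supported k-valued functions on valid indices.\<close>

type_synonym idx = "nat \<times> nat list list"

definition valid_idx :: "nat \<Rightarrow> idx \<Rightarrow> bool" where
  "valid_idx r i \<longleftrightarrow> (\<forall>v\<in>set (snd i). length v = r \<and> sum_list v = fst i)"

definition supp :: "(idx \<Rightarrow> 'k::zero) \<Rightarrow> idx set" where
  "supp f = {i. f i \<noteq> 0}"

definition alg :: "nat \<Rightarrow> (idx \<Rightarrow> 'k::comm_ring_1) set" where
  "alg r = {f. finite (supp f) \<and> (\<forall>i. f i \<noteq> 0 \<longrightarrow> valid_idx r i)}"

definition basis :: "idx \<Rightarrow> idx \<Rightarrow> 'k::comm_ring_1" where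
  "basis i = (\<lambda>j. if j = i then 1 else 0)"

text \<open>A split of [n+m] is encoded as a boolean list of length n+m, True marking
  the positions i_1<...<i_n (taken from the first factor).\<close>

fun merge :: "bool list \<Rightarrow> 'a list \<Rightarrow> 'a list \<Rightarrow> 'a list" where
  "merge [] xs ys = []"
| "merge (True # bs) (x # xs) ys = x # merge bs xs ys"
| "merge (False # bs) xs (y # ys) = y # merge bs xs ys"
| "merge (True # bs) [] ys = []"
| "merge (False # bs) xs [] = []"

definition shuffle_prod :: "bool list \<Rightarrow> (idx \<Rightarrow> 'k::comm_ring_1) \<Rightarrow> (idx \<Rightarrow> 'k) \<Rightarrow> (idx \<Rightarrow> 'k)" where
  "shuffle_prod bs f g = (\<lambda>(e, w). \<Sum>p\<in>supp f. \<Sum>q\<in>supp g.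
     if fst p = e \<and> fst q = e \<and> length (snd p) = count_list bs True
        \<and> length (snd q) = count_list bs False \<and> merge bs (snd p) (snd q) = w
     then f p * g q else 0)"

definition star_prod :: "(idx \<Rightarrow> 'k::comm_ring_1) \<Rightarrow> (idx \<Rightarrow> 'k) \<Rightarrow> (idx \<Rightarrow> 'k)" where
  "star_prod f g = (\<lambda>(c, w). \<Sum>p\<in>supp f. \<Sum>q\<in>supp g.
     if length (snd p) = length (snd q) \<and> fst p + fst q = c
        \<and> map2 (\<lambda>a b. map2 (+) a b) (snd p) (snd q) = w
     then f p * g q else 0)"

definition component :: "nat \<Rightarrow> nat \<Rightarrow> (idx \<Rightarrow> 'k::zero) \<Rightarrow> (idx \<Rightarrow> 'k)" where
  "component d n f = (\<lambda>i. if fst i = d \<and> length (snd i) = n then f i else 0)"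

definition is_ideal :: "nat \<Rightarrow> (idx \<Rightarrow> 'k::comm_ring_1) set \<Rightarrow> bool" where
  "is_ideal r I \<longleftrightarrow> I \<subseteq> alg r \<and> (\<lambda>_. 0) \<in> I
     \<and> (\<forall>f\<in>I. \<forall>g\<in>I. (\<lambda>i. f i + g i) \<in> I)
     \<and> (\<forall>f\<in>I. \<forall>c. (\<lambda>i. c * f i) \<in> I)
     \<and> (\<forall>f\<in>I. \<forall>d n. component d n f \<in> I)
     \<and> (\<forall>f\<in>I. \<forall>g\<in>alg r. star_prod g f \<in> I)
     \<and> (\<forall>f\<in>I. \<forall>g\<in>alg r. \<forall>bs. shuffle_prod bs g f \<in> I)"

definition ideal_gen :: "nat \<Rightarrow> (idx \<Rightarrow> 'k::comm_ring_1) set \<Rightarrow> (idx \<Rightarrow> 'k) set" where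
  "ideal_gen r S = \<Inter> {I. is_ideal r I \<and> S \<subseteq> I}"

definition mono_le :: "nat \<Rightarrow> (idx \<Rightarrow> 'k::comm_ring_1) \<Rightarrow> (idx \<Rightarrow> 'k) \<Rightarrow> bool" where
  "mono_le r m m' \<longleftrightarrow> m' \<in> ideal_gen r {m}"

definition letter_le :: "nat list \<Rightarrow> nat list \<Rightarrow> bool" where
  "letter_le a b \<longleftrightarrow> list_all2 (\<le>) a b"

definition word_le :: "nat list list \<Rightarrow> nat list list \<Rightarrow> bool" where
  "word_le u v \<longleftrightarrow> (\<exists>f. strict_mono_on {..<length u} f \<and>
      (\<forall>j<length u. f j < length v \<and> letter_le (u ! j) (v ! f j)))"

end

(* The elements supported on monomials whose word
   dominates w form an ideal, so the ideal generated by the monomial of w contains only monomials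
   above w.  Conversely, a monomial whose word dominates w is reached in two steps: one shuffle
   product inserts letters of degree d lying letterwise below the letters of the target word that
   w misses, and one star product then raises every letter to its target.  Noetherianity of the
   word order is Higman's lemma over Dickson's lemma, proved by Nash-Williams' minimal bad
   sequence argument. *)

theory Submission
  imports Defs "HOL-Library.Sublist" "HOL-Library.Ramsey"
begin

section \<open>Almost full relations and Higman's lemma\<close>

definition good :: "('a \<Rightarrow> 'a \<Rightarrow> bool) \<Rightarrow> (nat \<Rightarrow> 'a) \<Rightarrow> bool" where
  "good P f \<longleftrightarrow> (\<exists>i j. i < j \<and> P (f i) (f j))"

definition almost_full_on :: "('a \<Rightarrow> 'a \<Rightarrow> bool) \<Rightarrow> 'a set \<Rightarrow> bool" where
  "almost_full_on P A \<longleftrightarrow> (\<forall>f. (\<forall>i. f i \<in> A) \<longrightarrow> good P f)"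

lemma almost_full_onD: "almost_full_on P A \<Longrightarrow> (\<And>i. f i \<in> A) \<Longrightarrow> good P f"
  unfolding almost_full_on_def by blast

lemma almost_full_on_imp_homogeneous_subseq:
  assumes "almost_full_on P A" and "\<And>i. f i \<in> A"
  obtains \<phi> :: "nat \<Rightarrow> nat" where "strict_mono \<phi>" and "\<And>i j. i < j \<Longrightarrow> P (f (\<phi> i)) (f (\<phi> j))"
proof -
  define c where "c X = (if P (f (Min X)) (f (Max X)) then 0 else 1::nat)" for X :: "nat set"
  have "\<forall>x\<in>UNIV. \<forall>y\<in>UNIV. x \<noteq> y \<longrightarrow> c {x, y} < 2" by (simp add: c_def)
  from Ramsey2[OF infinite_UNIV_nat this] obtain Y t
    where Y: "infinite Y" and hom: "\<forall>x\<in>Y. \<forall>y\<in>Y. x \<noteq> y \<longrightarrow> c {x, y} = t"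
    by auto
  define \<phi> where "\<phi> = enumerate Y"
  have mono: "strict_mono \<phi>"
    unfolding \<phi>_def using enumerate_mono[OF _ Y] by (rule strict_monoI)
  have ordered: "Min {\<phi> i, \<phi> j} = \<phi> i \<and> Max {\<phi> i, \<phi> j} = \<phi> j" if "i < j" for i j
    using strict_monoD[OF mono that] by auto
  have colour: "c {\<phi> i, \<phi> j} = t" if "i < j" for i j
    using hom enumerate_in_set[OF Y] strict_monoD[OF mono that] unfolding \<phi>_def by simp
  have "good P (f \<circ> \<phi>)" by (rule almost_full_onD[OF assms(1)]) (simp add: assms(2))
  then obtain i j where "i < j" "P (f (\<phi> i)) (f (\<phi> j))" unfolding good_def by auto
  then have "t = 0" using colour[OF \<open>i < j\<close>] ordered[OF \<open>i < j\<close>] by (simp add: c_def)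
  show thesis
  proof (rule that[OF mono])
    fix i j :: nat
    assume "i < j"
    then show "P (f (\<phi> i)) (f (\<phi> j))"
      using colour[OF \<open>i < j\<close>] ordered[OF \<open>i < j\<close>] \<open>t = 0\<close> by (simp add: c_def split: if_splits)
  qed
qed

lemma almost_full_on_wellorder: "almost_full_on (\<le>) (UNIV :: 'a::wellorder set)"
  unfolding almost_full_on_def good_def
proof (intro allI impI)
  fix f :: "nat \<Rightarrow> 'a"
  have "(LEAST x. x \<in> range f) \<in> range f" by (rule LeastI[of _ "f 0"]) simp
  then obtain i where i: "f i = (LEAST x. x \<in> range f)" by auto
  have "(LEAST x. x \<in> range f) \<le> f (Suc i)" by (rule Least_le) simp
  then show "\<exists>i j. i < j \<and> f i \<le> f j" using i lessI by metis
qed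

lemma almost_full_on_list_all2:
  assumes "almost_full_on P A"
  shows "almost_full_on (list_all2 P) {xs. set xs \<subseteq> A \<and> length xs = n}"
proof (induction n)
  case 0
  show ?case unfolding almost_full_on_def good_def by (auto intro: exI[of _ 0] exI[of _ 1])
next
  case (Suc n)
  show ?case unfolding almost_full_on_def
  proof (intro allI impI)
    fix f :: "nat \<Rightarrow> _" assume f: "\<forall>i. f i \<in> {xs. set xs \<subseteq> A \<and> length xs = Suc n}"
    have f_Cons: "f i = hd (f i) # tl (f i)" for i
      using f[rule_format, of i] by (cases "f i") auto
    have hd_in: "hd (f i) \<in> A" and tl_in: "tl (f i) \<in> {xs. set xs \<subseteq> A \<and> length xs = n}" for i
      using f[rule_format, of i] by (cases "f i"; auto)+
    obtain \<phi> :: "nat \<Rightarrow> nat" where \<phi>: "strict_mono \<phi>"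
      and hd_le: "\<And>i j. i < j \<Longrightarrow> P (hd (f (\<phi> i))) (hd (f (\<phi> j)))"
      using almost_full_on_imp_homogeneous_subseq[OF assms, of "\<lambda>i. hd (f i)"] hd_in by blast
    obtain i j where "i < j" and tl_le: "list_all2 P (tl (f (\<phi> i))) (tl (f (\<phi> j)))"
      using almost_full_onD[OF Suc.IH, of "\<lambda>i. tl (f (\<phi> i))"] tl_in
      unfolding good_def by blast
    then have "list_all2 P (f (\<phi> i)) (f (\<phi> j))"
      using hd_le by (subst (1 2) f_Cons) simp
    then show "good (list_all2 P) f"
      unfolding good_def using \<open>i < j\<close> \<phi> by (meson strict_monoD)
  qed
qed

lemma minimal_bad_sequence:
  fixes B :: "(nat \<Rightarrow> 'a) \<Rightarrow> bool" and \<mu> :: "'a \<Rightarrow> nat"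
  assumes "B f"
  obtains m where "\<And>n. \<exists>g. B g \<and> (\<forall>i\<le>n. g i = m i)"
    and "\<And>n g. B g \<Longrightarrow> \<forall>i<n. g i = m i \<Longrightarrow> \<mu> (m n) \<le> \<mu> (g n)"
proof -
  define ext where "ext n s g \<longleftrightarrow> B g \<and> (\<forall>i<n. g i = s i)" for n s g
  define step where "step n s = (SOME g. ext n s g \<and> (\<forall>h. ext n s h \<longrightarrow> \<mu> (g n) \<le> \<mu> (h n)))"
    for n s
  have step: "ext n s (step n s) \<and> (\<forall>h. ext n s h \<longrightarrow> \<mu> (step n s n) \<le> \<mu> (h n))"
    if "B s" for n s
  proof -
    have "ext n s s" using that by (simp add: ext_def)
    then have "\<exists>g. ext n s g \<and> (\<forall>h. ext n s h \<longrightarrow> \<mu> (g n) \<le> \<mu> (h n))"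
      by (rule ex_has_least_nat[where m = "\<lambda>g. \<mu> (g n)"])
    then show ?thesis unfolding step_def by (rule someI_ex)
  qed
  define G where "G = rec_nat f step"
  have G_Suc: "G (Suc n) = step n (G n)" for n by (simp add: G_def)
  have B_G: "B (G n)" for n
  proof (induction n)
    case 0
    show ?case using \<open>B f\<close> by (simp add: G_def)
  next
    case (Suc n)
    show ?case using step[OF Suc.IH] unfolding G_Suc ext_def by blast
  qed
  define m where "m n = G (Suc n) n" for n
  have G_stable: "G k i = m i" if "i < k" for i k
    using that
  proof (induction k)
    case (Suc k)
    have "G (Suc k) i = G k i" if "i < k"
      using step[OF B_G[of k]] that unfolding G_Suc ext_def by simp
    then show ?case using Suc by (cases "i = k") (auto simp: m_def)
  qed simp
  show thesis
  proof (rule that)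
    fix n
    have "\<forall>i\<le>n. G (Suc n) i = m i" using G_stable by simp
    then show "\<exists>g. B g \<and> (\<forall>i\<le>n. g i = m i)" using B_G by blast
  next
    fix n g
    assume "B g" and "\<forall>i<n. g i = m i"
    then have "ext n (G n) g" unfolding ext_def using G_stable by simp
    then show "\<mu> (m n) \<le> \<mu> (g n)" using step[OF B_G[of n]] unfolding m_def G_Suc by blast
  qed
qed

lemma good_list_emb_from_tails:
  fixes m :: "nat \<Rightarrow> 'a list" and \<phi> :: "nat \<Rightarrow> nat"
  assumes \<phi>: "strict_mono \<phi>"
    and hd_le: "\<And>i j. i < j \<Longrightarrow> P (hd (m (\<phi> i))) (hd (m (\<phi> j)))"
    and "\<And>i. m i \<noteq> []"
    and "good (list_emb P) (\<lambda>i. if i < \<phi> 0 then m i else tl (m (\<phi> (i - \<phi> 0))))"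
  shows "good (list_emb P) m"
proof -
  have m_Cons: "m i = hd (m i) # tl (m i)" for i using assms(3)[of i] by simp
  obtain i j where "i < j"
    and emb: "list_emb P (if i < \<phi> 0 then m i else tl (m (\<phi> (i - \<phi> 0))))
                        (if j < \<phi> 0 then m j else tl (m (\<phi> (j - \<phi> 0))))"
    using assms(4) unfolding good_def by blast
  consider "j < \<phi> 0" | "i < \<phi> 0" "\<phi> 0 \<le> j" | "\<phi> 0 \<le> i"
    using \<open>i < j\<close> by linarith
  then show ?thesis
  proof cases
    case 1
    then show ?thesis using emb \<open>i < j\<close> unfolding good_def by auto
  next
    case 2
    let ?l = "\<phi> (j - \<phi> 0)"
    have "list_emb P (m i) (tl (m ?l))" using emb 2 by simp
    then have "list_emb P (m i) (m ?l)" by (subst m_Cons) (rule list_emb_Cons)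
    moreover have "i < ?l" using 2 strict_mono_less_eq[OF \<phi>, of 0 "j - \<phi> 0"] by simp
    ultimately show ?thesis unfolding good_def by blast
  next
    case 3
    let ?k = "\<phi> (i - \<phi> 0)" and ?l = "\<phi> (j - \<phi> 0)"
    have "i - \<phi> 0 < j - \<phi> 0" using 3 \<open>i < j\<close> by simp
    then have "P (hd (m ?k)) (hd (m ?l))" and "?k < ?l"
      using hd_le strict_monoD[OF \<phi>] by auto
    moreover have "list_emb P (tl (m ?k)) (tl (m ?l))" using emb 3 \<open>i < j\<close> by simp
    ultimately have "list_emb P (m ?k) (m ?l)" by (subst (1 2) m_Cons) (rule list_emb_Cons2)
    then show ?thesis using \<open>?k < ?l\<close> unfolding good_def by blast
  qed
qed

theorem almost_full_on_lists:
  assumes "almost_full_on P A"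
  shows "almost_full_on (list_emb P) (lists A)"
proof (rule ccontr)
  define bad where "bad f \<longleftrightarrow> (\<forall>i. f i \<in> lists A) \<and> \<not> good (list_emb P) f" for f
  assume "\<not> almost_full_on (list_emb P) (lists A)"
  then obtain f where "bad f" unfolding almost_full_on_def bad_def by blast
  then obtain m where prefix_bad: "\<And>n. \<exists>g. bad g \<and> (\<forall>i\<le>n. g i = m i)"
    and minimal: "\<And>n g. bad g \<Longrightarrow> \<forall>i<n. g i = m i \<Longrightarrow> length (m n) \<le> length (g n)"
    by (rule minimal_bad_sequence[of bad f length]) blast
  have m_lists: "m i \<in> lists A" for i
  proof -
    obtain g where "bad g" and "\<forall>k\<le>i. g k = m k" using prefix_bad by blast
    then show ?thesis unfolding bad_def by (metis order_refl)
  qed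
  have m_bad: "\<not> list_emb P (m i) (m j)" if "i < j" for i j
  proof -
    obtain g where "bad g" and "\<forall>k\<le>j. g k = m k" using prefix_bad by blast
    moreover have "g i = m i" "g j = m j" using calculation(2) that by simp_all
    ultimately show ?thesis using that unfolding bad_def good_def by metis
  qed
  have m_nonempty: "m i \<noteq> []" for i
    using m_bad[of i "Suc i"] by auto
  then have m_Cons: "m i = hd (m i) # tl (m i)" for i by simp
  have "hd (m i) \<in> A" for i using m_lists[of i] by (subst (asm) m_Cons) simp
  then obtain \<phi> :: "nat \<Rightarrow> nat" where \<phi>: "strict_mono \<phi>"
    and hd_le: "\<And>i j. i < j \<Longrightarrow> P (hd (m (\<phi> i))) (hd (m (\<phi> j)))"
    using almost_full_on_imp_homogeneous_subseq[OF assms, of "\<lambda>i. hd (m i)"] by blast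
  define g where "g i = (if i < \<phi> 0 then m i else tl (m (\<phi> (i - \<phi> 0))))" for i
  have "length (g (\<phi> 0)) < length (m (\<phi> 0))" unfolding g_def by (subst (2) m_Cons) simp
  moreover have "\<forall>i<\<phi> 0. g i = m i" by (simp add: g_def)
  ultimately have "\<not> bad g" using minimal[of g "\<phi> 0"] by (meson not_le)
  moreover have "g i \<in> lists A" for i
    using m_lists[of i] m_lists[of "\<phi> (i - \<phi> 0)"] unfolding g_def
    by (cases "m (\<phi> (i - \<phi> 0))") auto
  ultimately have "good (list_emb P) g" unfolding bad_def by blast
  then have "good (list_emb P) m"
    using good_list_emb_from_tails[of \<phi> P m, OF \<phi> hd_le m_nonempty] unfolding g_def by blast
  then show False using m_bad unfolding good_def by blast
qed

section \<open>Embeddings of words\<close>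

lemma word_le_Nil: "word_le [] v"
  unfolding word_le_def by (auto simp: strict_mono_on_def)

lemma word_le_Cons:
  assumes "word_le u v"
  shows "word_le u (b # v)"
proof -
  obtain f where "strict_mono_on {..<length u} f"
    and "\<forall>j<length u. f j < length v \<and> letter_le (u ! j) (v ! f j)"
    using assms unfolding word_le_def by blast
  then have "strict_mono_on {..<length u} (Suc \<circ> f)
      \<and> (\<forall>j<length u. (Suc \<circ> f) j < length (b # v) \<and> letter_le (u ! j) ((b # v) ! (Suc \<circ> f) j))"
    by (auto simp: strict_mono_on_def)
  then show ?thesis unfolding word_le_def by blast
qed

lemma word_le_Cons2:
  assumes "letter_le a b" and "word_le u v"
  shows "word_le (a # u) (b # v)"
proof -
  obtain f where f_mono: "strict_mono_on {..<length u} f"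
    and f_le: "\<forall>j<length u. f j < length v \<and> letter_le (u ! j) (v ! f j)"
    using assms(2) unfolding word_le_def by blast
  let ?g = "case_nat 0 (Suc \<circ> f)"
  have "strict_mono_on {..<length (a # u)} ?g"
  proof (rule strict_mono_onI)
    fix i j assume "i \<in> {..<length (a # u)}" "j \<in> {..<length (a # u)}" "i < j"
    then show "?g i < ?g j"
      using f_mono by (cases i; cases j) (auto simp: strict_mono_on_def)
  qed
  moreover have "?g j < length (b # v) \<and> letter_le ((a # u) ! j) ((b # v) ! ?g j)"
    if "j < length (a # u)" for j
    using that f_le assms(1) by (cases j) auto
  ultimately show ?thesis unfolding word_le_def by blast
qed

lemma list_emb_imp_word_le: "list_emb letter_le u v \<Longrightarrow> word_le u v"
  by (induction rule: list_emb.induct) (simp_all add: word_le_Nil word_le_Cons word_le_Cons2)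

lemma word_le_imp_list_emb: "word_le u v \<Longrightarrow> list_emb letter_le u v"
proof (induction u arbitrary: v)
  case (Cons a u)
  obtain f where f_mono: "strict_mono_on {..<length (a # u)} f"
    and f_le: "\<forall>j<length (a # u). f j < length v \<and> letter_le ((a # u) ! j) (v ! f j)"
    using Cons.prems unfolding word_le_def by blast
  define k where "k = f 0"
  have k: "k < length v" "letter_le a (v ! k)" using f_le by (auto simp: k_def)
  have f_Suc_mono: "f (Suc i) < f (Suc j)" if "i < j" "j < length u" for i j
    using f_mono that by (auto simp: strict_mono_on_def)
  have k_less: "k < f (Suc j)" if "j < length u" for j
    using f_mono that unfolding k_def strict_mono_on_def by auto
  have "word_le u (drop (Suc k) v)"
    unfolding word_le_def
  proof (intro exI conjI allI impI)
    show "strict_mono_on {..<length u} (\<lambda>j. f (Suc j) - Suc k)"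
    proof (rule strict_mono_onI)
      fix i j assume "i \<in> {..<length u}" "j \<in> {..<length u}" "i < j"
      then have "f (Suc i) < f (Suc j)" "k < f (Suc i)" using f_Suc_mono k_less by auto
      then show "f (Suc i) - Suc k < f (Suc j) - Suc k" by linarith
    qed
    show "f (Suc j) - Suc k < length (drop (Suc k) v)"
      and "letter_le (u ! j) (drop (Suc k) v ! (f (Suc j) - Suc k))" if "j < length u" for j
      using f_le[rule_format, of "Suc j"] k_less[of j] that by auto
  qed
  then have "list_emb letter_le (a # u) (v ! k # drop (Suc k) v)"
    using Cons.IH k(2) by blast
  then have "list_emb letter_le (a # u) (take k v @ v ! k # drop (Suc k) v)"
    by (rule list_emb_append2)
  then show ?case using id_take_nth_drop[OF k(1)] by simp
qed simp

lemma word_le_iff_list_emb: "word_le u v \<longleftrightarrow> list_emb letter_le u v"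
  using list_emb_imp_word_le word_le_imp_list_emb by blast

lemma good_word_le:
  fixes x :: "nat \<Rightarrow> nat list list"
  assumes "\<And>i. \<forall>v\<in>set (x i). length v = r"
  shows "\<exists>i j. i < j \<and> word_le (x i) (x j)"
proof -
  have "letter_le = list_all2 (\<le>)" by (intro ext) (simp add: letter_le_def)
  moreover have "almost_full_on (\<le>) (UNIV :: nat set)" by (rule almost_full_on_wellorder)
  ultimately have "almost_full_on letter_le {v. length v = r}"
    using almost_full_on_list_all2[of "(\<le>)" "UNIV :: nat set" r] by simp
  then have "good (list_emb letter_le) x"
    using almost_full_on_lists assms by (blast intro: almost_full_onD)
  then show ?thesis unfolding good_def word_le_iff_list_emb .
qed

lemma list_emb_compose:
  assumes "list_emb P xs ys" and "list_emb Q ys zs" and "\<And>x y z. P x y \<Longrightarrow> Q y z \<Longrightarrow> P x z"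
  shows "list_emb P xs zs"
  using assms(2,1)
proof (induction arbitrary: xs)
  case (list_emb_Cons2 y z ys zs)
  show ?case
  proof (cases xs)
    case (Cons x xs')
    then show ?thesis
      using list_emb_Cons2 assms(3) by (cases "P x y") auto
  qed simp
qed (auto dest: list_emb_Nil2)

lemma list_all2_imp_list_emb: "list_all2 P xs ys \<Longrightarrow> list_emb P xs ys"
  by (induction rule: list_all2_induct) auto

lemma set_merge:
  "length xs = count_list bs True \<Longrightarrow> length ys = count_list bs False \<Longrightarrow>
   set (merge bs xs ys) = set xs \<union> set ys"
  by (induction bs xs ys rule: merge.induct) auto

lemma subseq_merge:
  "length xs = count_list bs True \<Longrightarrow> length ys = count_list bs False \<Longrightarrow>
   subseq ys (merge bs xs ys)"
  by (induction bs xs ys rule: merge.induct) auto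

lemma subseq_imp_merge:
  "subseq ys zs \<Longrightarrow>
   \<exists>bs xs. zs = merge bs xs ys \<and> length xs = count_list bs True \<and> length ys = count_list bs False"
proof (induction rule: list_emb.induct)
  case (list_emb_Nil zs)
  let ?bs = "replicate (length zs) True"
  have "zs = merge ?bs zs [] \<and> length zs = count_list ?bs True \<and> 0 = count_list ?bs False"
    by (induction zs) auto
  then show ?case by (metis list.size(3))
next
  case (list_emb_Cons ys zs z)
  then obtain bs xs where "zs = merge bs xs ys" "length xs = count_list bs True"
    "length ys = count_list bs False" by blast
  then show ?case by (intro exI[of _ "True # bs"] exI[of _ "z # xs"]) simp
next
  case (list_emb_Cons2 y z ys zs)
  then obtain bs xs where "zs = merge bs xs ys" "length xs = count_list bs True"
    "length ys = count_list bs False" by blast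
  then show ?case using list_emb_Cons2(1) by (intro exI[of _ "False # bs"] exI[of _ xs]) simp
qed

lemma list_emb_imp_subseq_list_all2:
  assumes "list_emb P xs ys" and "\<forall>y\<in>set ys. P (h y) y"
  shows "\<exists>zs. subseq xs zs \<and> list_all2 P zs ys \<and> set zs \<subseteq> set xs \<union> h ` set ys"
  using assms
proof (induction rule: list_emb.induct)
  case (list_emb_Nil ys)
  then have "list_all2 P (map h ys) ys" by (induction ys) auto
  then show ?case by auto
next
  case (list_emb_Cons xs ys y)
  then obtain zs where "subseq xs zs" "list_all2 P zs ys" "set zs \<subseteq> set xs \<union> h ` set ys" by auto
  then show ?case using list_emb_Cons.prems by (intro exI[of _ "h y # zs"]) auto
next
  case (list_emb_Cons2 x y xs ys)
  then obtain zs where "subseq xs zs" "list_all2 P zs ys" "set zs \<subseteq> set xs \<union> h ` set ys" by auto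
  then show ?case using list_emb_Cons2.hyps(1) by (intro exI[of _ "x # zs"]) auto
qed

lemma letter_le_trans: "letter_le a b \<Longrightarrow> letter_le b c \<Longrightarrow> letter_le a c"
  unfolding letter_le_def by (rule list_all2_trans) auto

lemma letter_le_map2_plus: "length c = length b \<Longrightarrow> letter_le b (map2 (+) c b)"
  unfolding letter_le_def by (induction c b rule: list_induct2) auto

lemma sum_list_map2_plus:
  "length a = length b \<Longrightarrow> sum_list (map2 (+) a b) = sum_list a + sum_list (b :: 'a::comm_monoid_add list)"
  by (induction a b rule: list_induct2) (simp_all add: algebra_simps)

lemma letter_le_imp_diff:
  "letter_le a b \<Longrightarrow> length (map2 (-) b a) = length b \<and> map2 (+) (map2 (-) b a) a = b"
  unfolding letter_le_def by (induction rule: list_all2_induct) (auto dest: list_all2_lengthD)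

lemma letter_le_imp_sum_list_le: "letter_le a b \<Longrightarrow> sum_list a \<le> sum_list b"
  unfolding letter_le_def by (induction rule: list_all2_induct) auto

lemma letter_degree_lowering:
  "d \<le> sum_list y \<Longrightarrow> \<exists>z. letter_le z y \<and> sum_list z = d"
proof (induction y arbitrary: d)
  case (Cons a y)
  show ?case
  proof (cases "d \<le> sum_list y")
    case True
    then obtain z where "letter_le z y" "sum_list z = d" using Cons.IH by blast
    then show ?thesis by (intro exI[of _ "0 # z"]) (simp add: letter_le_def)
  next
    case False
    then show ?thesis using Cons.prems
      by (intro exI[of _ "(d - sum_list y) # y"]) (auto simp: letter_le_def list.rel_refl)
  qed
qed (intro exI[of _ "[]"], simp add: letter_le_def)

section \<open>Monomial ideals\<close>

lemma valid_idx_Nil [simp]: "valid_idx r (d, [])"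
  by (simp add: valid_idx_def)

lemma valid_idx_Cons [simp]:
  "valid_idx r (d, a # w) \<longleftrightarrow> length a = r \<and> sum_list a = d \<and> valid_idx r (d, w)"
  by (auto simp: valid_idx_def)

lemma valid_idx_map2_plus:
  "length u = length v \<Longrightarrow> valid_idx r (d, u) \<Longrightarrow> valid_idx r (e, v) \<Longrightarrow>
   valid_idx r (d + e, map2 (\<lambda>a b. map2 (+) a b) u v)"
  by (induction u v rule: list_induct2) (simp_all add: sum_list_map2_plus)

lemma valid_idx_merge:
  "length u = count_list bs True \<Longrightarrow> length v = count_list bs False \<Longrightarrow>
   valid_idx r (d, u) \<Longrightarrow> valid_idx r (d, v) \<Longrightarrow> valid_idx r (d, merge bs u v)"
  by (auto simp: valid_idx_def set_merge)

lemma list_all2_letter_le_map2_plus: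
  "length u = length v \<Longrightarrow> valid_idx r (d, u) \<Longrightarrow> valid_idx r (e, v) \<Longrightarrow>
   list_all2 letter_le v (map2 (\<lambda>a b. map2 (+) a b) u v)"
  by (induction u v rule: list_induct2) (simp_all add: letter_le_map2_plus)

lemma in_alg_iff: "f \<in> alg r \<longleftrightarrow> finite (supp f) \<and> (\<forall>i\<in>supp f. valid_idx r i)"
  by (auto simp: alg_def supp_def)

lemma supp_basis [simp]: "supp (basis i :: idx \<Rightarrow> 'k::comm_ring_1) = {i}"
  by (auto simp: supp_def basis_def)

lemma basis_in_alg: "valid_idx r i \<Longrightarrow> (basis i :: idx \<Rightarrow> 'k::comm_ring_1) \<in> alg r"
  by (simp add: in_alg_iff)

lemma star_prod_basis:
  assumes "length w = length w'"
  shows "star_prod (basis (d, w)) (basis (d', w')) =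
    (basis (d + d', map2 (\<lambda>a b. map2 (+) a b) w w') :: idx \<Rightarrow> 'k::comm_ring_1)"
proof (rule ext)
  fix i :: idx
  show "star_prod (basis (d, w)) (basis (d', w')) i = basis (d + d', map2 (\<lambda>a b. map2 (+) a b) w w') i"
    using assms unfolding star_prod_def supp_basis by (cases i) (auto simp: basis_def)
qed

lemma shuffle_prod_basis:
  assumes "length w = count_list bs True" and "length w' = count_list bs False"
  shows "shuffle_prod bs (basis (d, w)) (basis (d, w')) =
    (basis (d, merge bs w w') :: idx \<Rightarrow> 'k::comm_ring_1)"
proof (rule ext)
  fix i :: idx
  show "shuffle_prod bs (basis (d, w)) (basis (d, w')) i = basis (d, merge bs w w') i"
    using assms unfolding shuffle_prod_def supp_basis by (cases i) (auto simp: basis_def)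
qed

lemma sum_sum_if_nonzeroD:
  assumes "(\<Sum>p\<in>A. \<Sum>q\<in>B. if C p q then F p q else 0) \<noteq> (0::'a::comm_monoid_add)"
  shows "\<exists>p\<in>A. \<exists>q\<in>B. C p q"
proof (rule ccontr)
  assume "\<not> (\<exists>p\<in>A. \<exists>q\<in>B. C p q)"
  then have "(\<Sum>p\<in>A. \<Sum>q\<in>B. if C p q then F p q else 0) = 0" by (simp add: sum.neutral)
  then show False using assms by contradiction
qed

lemma supp_star_prodD:
  assumes "(c, w) \<in> supp (star_prod g f)"
  obtains d u e v where "(d, u) \<in> supp g" "(e, v) \<in> supp f" "length u = length v"
    "c = d + e" "w = map2 (\<lambda>a b. map2 (+) a b) u v"
proof -
  have "\<exists>p\<in>supp g. \<exists>q\<in>supp f. length (snd p) = length (snd q) \<and> fst p + fst q = c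
      \<and> map2 (\<lambda>a b. map2 (+) a b) (snd p) (snd q) = w"
    using assms unfolding supp_def star_prod_def by (intro sum_sum_if_nonzeroD) simp
  then show thesis using that by force
qed

lemma supp_shuffle_prodD:
  assumes "(c, w) \<in> supp (shuffle_prod bs g f)"
  obtains u v where "(c, u) \<in> supp g" "(c, v) \<in> supp f" "length u = count_list bs True"
    "length v = count_list bs False" "w = merge bs u v"
proof -
  have "\<exists>p\<in>supp g. \<exists>q\<in>supp f. fst p = c \<and> fst q = c \<and> length (snd p) = count_list bs True
      \<and> length (snd q) = count_list bs False \<and> merge bs (snd p) (snd q) = w"
    using assms unfolding supp_def shuffle_prod_def by (intro sum_sum_if_nonzeroD) simp
  then show thesis using that by force
qed

lemma star_prod_in_alg:
  assumes g: "g \<in> alg r" and f: "f \<in> alg r"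
  shows "star_prod g f \<in> alg r"
proof -
  let ?add = "\<lambda>(p, q). (fst p + fst q, map2 (\<lambda>a b. map2 (+) a b) (snd p) (snd q))"
  have "i \<in> ?add ` (supp g \<times> supp f) \<and> valid_idx r i" if i_supp: "i \<in> supp (star_prod g f)" for i
  proof -
    obtain c w where i: "i = (c, w)" by (cases i)
    obtain d u e v where du: "(d, u) \<in> supp g" and ev: "(e, v) \<in> supp f"
      and "length u = length v" and "c = d + e" and "w = map2 (\<lambda>a b. map2 (+) a b) u v"
      using i_supp unfolding i by (rule supp_star_prodD)
    moreover have "valid_idx r (d, u)" "valid_idx r (e, v)" using du ev g f by (simp_all add: in_alg_iff)
    ultimately show ?thesis unfolding i by (force simp: valid_idx_map2_plus)
  qed
  moreover have "finite (?add ` (supp g \<times> supp f))" using g f by (simp add: in_alg_iff)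
  ultimately show ?thesis unfolding in_alg_iff by (meson finite_subset subsetI)
qed

lemma shuffle_prod_in_alg:
  assumes g: "g \<in> alg r" and f: "f \<in> alg r"
  shows "shuffle_prod bs g f \<in> alg r"
proof -
  let ?merge = "\<lambda>(p, q). (fst p, merge bs (snd p) (snd q))"
  have "i \<in> ?merge ` (supp g \<times> supp f) \<and> valid_idx r i" if i_supp: "i \<in> supp (shuffle_prod bs g f)" for i
  proof -
    obtain c w where i: "i = (c, w)" by (cases i)
    obtain u v where cu: "(c, u) \<in> supp g" and cv: "(c, v) \<in> supp f"
      and "length u = count_list bs True" "length v = count_list bs False" "w = merge bs u v"
      using i_supp unfolding i by (rule supp_shuffle_prodD)
    moreover have "valid_idx r (c, u)" "valid_idx r (c, v)" using cu cv g f by (simp_all add: in_alg_iff)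
    ultimately show ?thesis unfolding i by (force simp: valid_idx_merge)
  qed
  moreover have "finite (?merge ` (supp g \<times> supp f))" using g f by (simp add: in_alg_iff)
  ultimately show ?thesis unfolding in_alg_iff by (meson finite_subset subsetI)
qed

definition word_ideal :: "nat \<Rightarrow> nat list list \<Rightarrow> (idx \<Rightarrow> 'k::comm_ring_1) set" where
  "word_ideal r w = {f \<in> alg r. \<forall>i\<in>supp f. list_emb letter_le w (snd i)}"

lemma word_ideal_supp_subset:
  assumes "f \<in> word_ideal r w" and "g \<in> word_ideal r w" and "supp h \<subseteq> supp f \<union> supp g"
  shows "h \<in> word_ideal r w"
  using assms unfolding word_ideal_def in_alg_iff by (auto intro: finite_subset)

lemma is_ideal_word_ideal: "is_ideal r (word_ideal r w :: (idx \<Rightarrow> 'k::comm_ring_1) set)"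
  unfolding is_ideal_def
proof (intro conjI ballI allI)
  show "word_ideal r w \<subseteq> alg r" by (auto simp: word_ideal_def)
  show "(\<lambda>_. 0) \<in> (word_ideal r w :: (idx \<Rightarrow> 'k) set)" by (simp add: word_ideal_def in_alg_iff supp_def)
next
  fix f g :: "idx \<Rightarrow> 'k" assume "f \<in> word_ideal r w" "g \<in> word_ideal r w"
  then show "(\<lambda>i. f i + g i) \<in> word_ideal r w"
    by (rule word_ideal_supp_subset) (auto simp: supp_def)
next
  fix f :: "idx \<Rightarrow> 'k" and c d n assume f: "f \<in> word_ideal r w"
  show "(\<lambda>i. c * f i) \<in> word_ideal r w"
    using f f by (rule word_ideal_supp_subset) (auto simp: supp_def)
  show "component d n f \<in> word_ideal r w"
    using f f by (rule word_ideal_supp_subset) (auto simp: supp_def component_def)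
next
  fix f g :: "idx \<Rightarrow> 'k" assume f: "f \<in> word_ideal r w" and g: "g \<in> alg r"
  have "list_emb letter_le w (snd i)" if i_supp: "i \<in> supp (star_prod g f)" for i
  proof -
    obtain c x where i: "i = (c, x)" by (cases i)
    obtain d u e v where du: "(d, u) \<in> supp g" and ev: "(e, v) \<in> supp f"
      and len: "length u = length v" and x: "x = map2 (\<lambda>a b. map2 (+) a b) u v"
      using i_supp unfolding i by (rule supp_star_prodD)
    have "valid_idx r (d, u)" "valid_idx r (e, v)"
      using du ev f g by (simp_all add: word_ideal_def in_alg_iff)
    then have "list_emb letter_le v x"
      unfolding x by (intro list_all2_imp_list_emb list_all2_letter_le_map2_plus len)
    moreover have "list_emb letter_le w v" using f ev unfolding word_ideal_def by fastforce
    ultimately show ?thesis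
      unfolding i by (auto intro: list_emb_compose letter_le_trans)
  qed
  then show "star_prod g f \<in> word_ideal r w"
    using star_prod_in_alg[OF g] f by (simp add: word_ideal_def)
next
  fix f g :: "idx \<Rightarrow> 'k" and bs assume f: "f \<in> word_ideal r w" and g: "g \<in> alg r"
  have "list_emb letter_le w (snd i)" if i_supp: "i \<in> supp (shuffle_prod bs g f)" for i
  proof -
    obtain c x where i: "i = (c, x)" by (cases i)
    obtain u v where cv: "(c, v) \<in> supp f" and "length u = count_list bs True"
      and "length v = count_list bs False" and x: "x = merge bs u v"
      using i_supp unfolding i by (rule supp_shuffle_prodD)
    then have "subseq v x" by (simp add: subseq_merge)
    moreover have "list_emb letter_le w v" using f cv unfolding word_ideal_def by fastforce
    ultimately show ?thesis
      unfolding i by (auto intro: list_emb_compose)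
  qed
  then show "shuffle_prod bs g f \<in> word_ideal r w"
    using shuffle_prod_in_alg[OF g] f by (simp add: word_ideal_def)
qed

lemma mono_le_imp_list_emb:
  assumes "valid_idx r (d, w)" and "mono_le r (basis (d, w) :: idx \<Rightarrow> 'k::comm_ring_1) (basis (d', w'))"
  shows "list_emb letter_le w w'"
proof -
  have "(basis (d, w) :: idx \<Rightarrow> 'k) \<in> word_ideal r w"
    using basis_in_alg[OF assms(1)] by (simp add: word_ideal_def list_emb_refl letter_le_def list.rel_refl)
  then have "ideal_gen r {basis (d, w)} \<subseteq> (word_ideal r w :: (idx \<Rightarrow> 'k) set)"
    unfolding ideal_gen_def using is_ideal_word_ideal by (intro Inter_lower) simp
  then have "(basis (d', w') :: idx \<Rightarrow> 'k) \<in> word_ideal r w"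
    using assms(2) unfolding mono_le_def by blast
  then show ?thesis by (simp add: word_ideal_def)
qed

lemma degree_le_if_list_emb:
  assumes "valid_idx r (d, w)" and "valid_idx r (d', w')" and "w \<noteq> []"
    and "list_emb letter_le w w'"
  shows "d \<le> d'"
proof -
  obtain a where "a \<in> set w" using assms(3) by (cases w) auto
  then obtain b where "b \<in> set w'" and "letter_le a b" using assms(4) by (blast elim: list_emb_set)
  then show ?thesis
    using \<open>a \<in> set w\<close> assms(1,2) letter_le_imp_sum_list_le by (force simp: valid_idx_def)
qed

lemma letterwise_le_imp_word_sum:
  assumes "list_all2 letter_le u w" and "valid_idx r (d, u)" and "valid_idx r (d', w)" and "d \<le> d'"
  shows "\<exists>v. valid_idx r (d' - d, v) \<and> length v = length u \<and> map2 (\<lambda>a b. map2 (+) a b) v u = w"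
  using assms
proof (induction rule: list_all2_induct)
  case (Cons x xs y ys)
  then obtain v where v: "valid_idx r (d' - d, v)" "length v = length xs"
    "map2 (\<lambda>a b. map2 (+) a b) v xs = ys" by auto
  let ?c = "map2 (-) y x"
  have c: "length ?c = length y" "map2 (+) ?c x = y" using letter_le_imp_diff[OF Cons.hyps(1)] by auto
  moreover have "length x = length y" using Cons.prems by simp
  ultimately have "sum_list y = sum_list ?c + sum_list x" by (metis sum_list_map2_plus)
  then have "valid_idx r (d' - d, ?c # v)" using Cons.prems c(1) v(1) by simp arith
  then show ?case using c(2) v(2,3) by (intro exI[of _ "?c # v"]) simp
qed simp

lemma basis_in_ideal_if_list_emb:
  fixes I :: "(idx \<Rightarrow> 'k::comm_ring_1) set"
  assumes I: "is_ideal r I" and "basis (d, w) \<in> I"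
    and w: "valid_idx r (d, w)" and w': "valid_idx r (d', w')"
    and "d \<le> d'" and "list_emb letter_le w w'"
  shows "basis (d', w') \<in> I"
proof -
  have "\<forall>y\<in>set w'. \<exists>z. letter_le z y \<and> sum_list z = d"
    using w' \<open>d \<le> d'\<close> by (auto simp: valid_idx_def intro: letter_degree_lowering)
  then obtain h where h: "\<forall>y\<in>set w'. letter_le (h y) y \<and> sum_list (h y) = d" by metis
  obtain w'' where "subseq w w''" and w''_le: "list_all2 letter_le w'' w'"
    and "set w'' \<subseteq> set w \<union> h ` set w'"
    using list_emb_imp_subseq_list_all2[OF \<open>list_emb letter_le w w'\<close>] h by blast
  then have w'': "valid_idx r (d, w'')"
    using w w' h by (fastforce simp: valid_idx_def letter_le_def dest: list_all2_lengthD)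
  obtain bs u where merge: "w'' = merge bs u w"
    and len: "length u = count_list bs True" "length w = count_list bs False"
    using subseq_imp_merge[OF \<open>subseq w w''\<close>] by blast
  have "valid_idx r (d, u)" using w'' len unfolding merge by (simp add: valid_idx_def set_merge)
  then have "shuffle_prod bs (basis (d, u)) (basis (d, w)) \<in> I"
    using I \<open>basis (d, w) \<in> I\<close> basis_in_alg unfolding is_ideal_def by blast
  moreover have "shuffle_prod bs (basis (d, u)) (basis (d, w)) = (basis (d, w'') :: idx \<Rightarrow> 'k)"
    using shuffle_prod_basis[OF len] merge by simp
  ultimately have w''_in: "basis (d, w'') \<in> I" by simp
  obtain v where v: "valid_idx r (d' - d, v)" "length v = length w''"
    and sum: "map2 (\<lambda>a b. map2 (+) a b) v w'' = w'"
    using letterwise_le_imp_word_sum[OF w''_le w'' w' \<open>d \<le> d'\<close>] by blast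
  have "star_prod (basis (d' - d, v)) (basis (d, w'')) \<in> I"
    using I w''_in basis_in_alg[OF v(1)] unfolding is_ideal_def by blast
  moreover have "star_prod (basis (d' - d, v)) (basis (d, w'')) = (basis (d', w') :: idx \<Rightarrow> 'k)"
    using star_prod_basis[where 'k = 'k, OF v(2), of "d' - d" d] sum \<open>d \<le> d'\<close> by simp
  ultimately show ?thesis by simp
qed

lemma list_emb_imp_mono_le:
  assumes "valid_idx r (d, w)" and "valid_idx r (d', w')" and "d \<le> d'"
    and "list_emb letter_le w w'"
  shows "mono_le r (basis (d, w) :: idx \<Rightarrow> 'k::comm_ring_1) (basis (d', w'))"
  unfolding mono_le_def ideal_gen_def
  using basis_in_ideal_if_list_emb[OF _ _ assms] by blast

theorem proposition2p4:
  fixes r :: nat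
  assumes "0 < r" and "noetherian_ring TYPE('k::comm_ring_1)"
  shows "(\<forall>d w d' w'. valid_idx r (d, w) \<longrightarrow> valid_idx r (d', w') \<longrightarrow> (w \<noteq> [] \<or> d \<le> d') \<longrightarrow>
            (mono_le r (basis (d, w) :: idx \<Rightarrow> 'k) (basis (d', w')) \<longleftrightarrow> word_le w w'))
       \<and> (\<forall>x :: nat \<Rightarrow> nat list list. (\<forall>i. \<forall>v\<in>set (x i). length v = r) \<longrightarrow>
            (\<exists>i j. i < j \<and> word_le (x i) (x j)))"
proof (intro conjI allI impI)
  fix d w d' w'
  assume w: "valid_idx r (d, w)" and w': "valid_idx r (d', w')" and "w \<noteq> [] \<or> d \<le> d'"
  show "mono_le r (basis (d, w) :: idx \<Rightarrow> 'k) (basis (d', w')) \<longleftrightarrow> word_le w w'"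
  proof
    assume "mono_le r (basis (d, w) :: idx \<Rightarrow> 'k) (basis (d', w'))"
    then show "word_le w w'" using mono_le_imp_list_emb[OF w] word_le_iff_list_emb by blast
  next
    assume "word_le w w'"
    then have emb: "list_emb letter_le w w'" by (simp add: word_le_iff_list_emb)
    then have "d \<le> d'" using \<open>w \<noteq> [] \<or> d \<le> d'\<close> degree_le_if_list_emb[OF w w'] by blast
    then show "mono_le r (basis (d, w) :: idx \<Rightarrow> 'k) (basis (d', w'))"
      using list_emb_imp_mono_le[OF w w' _ emb] by blast
  qed
next
  fix x :: "nat \<Rightarrow> nat list list"
  assume "\<forall>i. \<forall>v\<in>set (x i). length v = r"
  then show "\<exists>i j. i < j \<and> word_le (x i) (x j)" by (intro good_word_le) blast
qed

end
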